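(* Let $q\ge1$ and $t\ge0$ be integers. If a code $\mathcal{C}\subseteq\mathcal{S}_{\mathrm{all}}^q$ is a $t$-tail-insertion-detecting code, then it is a $t$-tail-insertion-correcting code.
   Context: Let $[q]=\{0,1,\dots,q-1\}$. For $1\le m\le q$, a partial permutation of length $m$ over $[q]$ is a sequence $\pi=(\pi_1,\dots,\pi_m)$ of $m$ pairwise distinct elements of $[q]$. Let $\mathcal{S}_m^q$ be the set of all partial permutations of length $m$ and $\mathcal{S}_{\mathrm{all}}^q=\bigcup_{m=1}^{q}\mathcal{S}_m^q$. A code is any subset of $\mathcal{S}_{\mathrm{all}}^q$. Juxtaposition $\omega\pi$ denotes concatenation with $\omega$ on the left. For an integer $t\ge0$, $\mathcal{B}_{\mathrm{ins}}^t(\pi)$ is the set of all $\omega\pi\in\mathcal{S}_{\mathrm{all}}^q$ where $\omega$ is a (possibly empty) sequence of at most $t$ elements of $[q]$ (so all entries of $\omega\pi$ are pairwise distinct). A code $\mathcal{C}$ is $t$-tail-insertion-detecting if $\mathcal{C}\cap\mathcal{B}_{\mathrm{ins}}^t(\pi)=\{\pi\}$ for every $\pi\in\mathcal{C}$, and $t$-tail-insertion-correcting if $\mathcal{B}_{\mathrm{ins}}^t(\pi_1)\cap\mathcal{B}_{\mathrm{ins}}^t(\pi_2)=\emptyset$ for all distinct $\pi_1,\pi_2\in\mathcal{C}$. *)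

theory Defs
  imports Main
begin

(* partial permutations over [q] = {0..<q}: nonempty lists of pairwise distinct elements of [q] *)
definition S_all :: "nat \<Rightarrow> nat list set" where
  "S_all q = {\<pi>. \<pi> \<noteq> [] \<and> distinct \<pi> \<and> set \<pi> \<subseteq> {0..<q}}"

definition B_ins :: "nat \<Rightarrow> nat \<Rightarrow> nat list \<Rightarrow> nat list set" where
  "B_ins q t \<pi> = {\<omega> @ \<pi> | \<omega>. length \<omega> \<le> t \<and> set \<omega> \<subseteq> {0..<q} \<and> \<omega> @ \<pi> \<in> S_all q}"

definition tail_ins_detecting :: "nat \<Rightarrow> nat \<Rightarrow> nat list set \<Rightarrow> bool" where
  "tail_ins_detecting q t C \<longleftrightarrow> (\<forall>\<pi>\<in>C. C \<inter> B_ins q t \<pi> = {\<pi>})"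

definition tail_ins_correcting :: "nat \<Rightarrow> nat \<Rightarrow> nat list set \<Rightarrow> bool" where
  "tail_ins_correcting q t C \<longleftrightarrow>
     (\<forall>\<pi>1\<in>C. \<forall>\<pi>2\<in>C. \<pi>1 \<noteq> \<pi>2 \<longrightarrow> B_ins q t \<pi>1 \<inter> B_ins q t \<pi>2 = {})"

end

theory Submission
  imports Defs
begin

text \<open>Two tail-insertion balls can only meet if one centre is obtained from the other by
  prepending at most \<open>t\<close> symbols, i.e. if one centre lies in the ball of the other; detection
  excludes exactly this for distinct codewords.\<close>

lemma B_ins_intersect_imp_prepend:
  assumes "B_ins q t \<pi>1 \<inter> B_ins q t \<pi>2 \<noteq> {}"
  obtains us where "length us \<le> t" and "\<pi>1 = us @ \<pi>2 \<or> \<pi>2 = us @ \<pi>1"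
proof -
  from assms obtain \<omega>1 \<omega>2 where len1: "length \<omega>1 \<le> t" and len2: "length \<omega>2 \<le> t"
    and common: "\<omega>1 @ \<pi>1 = \<omega>2 @ \<pi>2"
    unfolding B_ins_def by blast
  from common obtain us where
    "(\<omega>1 = \<omega>2 @ us \<and> us @ \<pi>1 = \<pi>2) \<or> (\<omega>1 @ us = \<omega>2 \<and> \<pi>1 = us @ \<pi>2)"
    by (auto simp: append_eq_append_conv2)
  with len1 len2 show thesis
    using that[of us] by auto
qed

lemma prepend_in_B_ins:
  assumes "us @ \<pi> \<in> S_all q" and "length us \<le> t"
  shows "us @ \<pi> \<in> B_ins q t \<pi>"
  using assms unfolding B_ins_def S_all_def by auto

lemma tail_ins_detecting_prepend_eq:
  assumes "C \<subseteq> S_all q" and "tail_ins_detecting q t C"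
    and "\<pi> \<in> C" and "us @ \<pi> \<in> C" and "length us \<le> t"
  shows "us @ \<pi> = \<pi>"
proof -
  have "us @ \<pi> \<in> C \<inter> B_ins q t \<pi>"
    using assms prepend_in_B_ins by blast
  then show ?thesis
    using assms(2,3) unfolding tail_ins_detecting_def by blast
qed

theorem mainTheorem2:
  fixes q t :: nat and C :: "nat list set"
  assumes "q \<ge> 1"
    and "C \<subseteq> S_all q"
    and "tail_ins_detecting q t C"
  shows "tail_ins_correcting q t C"
  unfolding tail_ins_correcting_def
proof (intro ballI impI)
  fix \<pi>1 \<pi>2 assume "\<pi>1 \<in> C" "\<pi>2 \<in> C" "\<pi>1 \<noteq> \<pi>2"
  show "B_ins q t \<pi>1 \<inter> B_ins q t \<pi>2 = {}"
  proof (rule ccontr)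
    assume "B_ins q t \<pi>1 \<inter> B_ins q t \<pi>2 \<noteq> {}"
    then obtain us where "length us \<le> t" and "\<pi>1 = us @ \<pi>2 \<or> \<pi>2 = us @ \<pi>1"
      by (rule B_ins_intersect_imp_prepend)
    then show False
      using tail_ins_detecting_prepend_eq[OF assms(2,3)] \<open>\<pi>1 \<in> C\<close> \<open>\<pi>2 \<in> C\<close> \<open>\<pi>1 \<noteq> \<pi>2\<close>
      by metis
  qed
qed

end
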